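(* For every bijection $\phi:\mathbb N\to\mathbb N$, the map $\phi_*:(\mathrm{Conf}^{lf}_\infty(\mathbb C),d_{\Sigma})\to(\mathrm{Conf}^{lf}_\infty(\mathbb C),d_{\Sigma})$, $\phi_*((a_j)_{j\ge1})=(a_{\phi(j)})_{j\ge1}$, is continuous and in fact a homeomorphism.
   Context: $\mathrm{Conf}^{lf}_\infty(\mathbb C)$ is the set of sequences $x=(x_j)_{j\in\mathbb N}\in\mathbb C^{\mathbb N}$ with $x_i\ne x_j$ for $i\neq j$ and such that for every $R>0$ the set $\{j:|x_j|\le R\}$ is finite. $P(x)=\{x_j:j\in\mathbb N\}$, which lies in $C^{lf}_\infty(\mathbb C)$, the set of countably infinite locally finite subsets of $\mathbb C$. Let $d_{\mathrm{prod}}(x,y)=\sum_j 2^{-j}\min\{|x_j-y_j|,1\}$, and $d_{\Sigma}(x,y)=d_{\mathrm{prod}}(x,y)+d_{\mathcal V}(P(x),P(y))$, where $d_{\mathcal V}$ is the vague metric: for a fixed sequence $(\varphi_j)\subset C_c(\mathbb C)$ such that for each $m$ the $\varphi_j$ supported in $\{|z|\le m\}$ are sup-norm dense among compactly supported continuous real functions supported in $\{|z|\le m\}$, $d_{\mathcal V}(A,B)=\sum_j 2^{-j}\frac{|\sum_{a\in A}\varphi_j(a)-\sum_{b\in B}\varphi_j(b)|}{1+|\sum_{a\in A}\varphi_j(a)-\sum_{b\in B}\varphi_j(b)|}$. *)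

theory Defs
  imports "HOL-Analysis.Analysis"
begin

text \<open>Sequences are indexed by nat starting at 0; index j here corresponds to
  index j+1 in the paper, so the weight 2^-j of the paper becomes 1/2^(Suc j).\<close>

definition Conf_lf :: "(nat \<Rightarrow> complex) set" where
  "Conf_lf = {x. inj x \<and> (\<forall>R>0. finite {j. cmod (x j) \<le> R})}"

definition Pset :: "(nat \<Rightarrow> complex) \<Rightarrow> complex set" where
  "Pset x = range x"

definition d_prod :: "(nat \<Rightarrow> complex) \<Rightarrow> (nat \<Rightarrow> complex) \<Rightarrow> real" where
  "d_prod x y = (\<Sum>j. (1 / 2 ^ Suc j) * min (cmod (x j - y j)) 1)"

text \<open>Sum of a test function over a (locally finite) point set; only the finitely
  many points where the function is nonzero contribute.\<close>
definition psum :: "(complex \<Rightarrow> real) \<Rightarrow> complex set \<Rightarrow> real" where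
  "psum f A = (\<Sum>a\<in>{a\<in>A. f a \<noteq> 0}. f a)"

definition d_vague :: "(nat \<Rightarrow> complex \<Rightarrow> real) \<Rightarrow> complex set \<Rightarrow> complex set \<Rightarrow> real" where
  "d_vague \<phi> A B = (\<Sum>j. (1 / 2 ^ Suc j) *
      (\<bar>psum (\<phi> j) A - psum (\<phi> j) B\<bar> / (1 + \<bar>psum (\<phi> j) A - psum (\<phi> j) B\<bar>)))"

definition d_Sigma :: "(nat \<Rightarrow> complex \<Rightarrow> real) \<Rightarrow> (nat \<Rightarrow> complex) \<Rightarrow> (nat \<Rightarrow> complex) \<Rightarrow> real" where
  "d_Sigma \<phi> x y = d_prod x y + d_vague \<phi> (Pset x) (Pset y)"

definition admissible_tests :: "(nat \<Rightarrow> complex \<Rightarrow> real) \<Rightarrow> bool" where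
  "admissible_tests \<phi> \<longleftrightarrow>
     (\<forall>j. continuous_on UNIV (\<phi> j) \<and> compact (closure {z. \<phi> j z \<noteq> 0})) \<and>
     (\<forall>m::nat. \<forall>f::complex \<Rightarrow> real.
        continuous_on UNIV f \<and> closure {z. f z \<noteq> 0} \<subseteq> cball 0 (real m) \<longrightarrow>
        (\<forall>\<epsilon>>0. \<exists>j. closure {z. \<phi> j z \<noteq> 0} \<subseteq> cball 0 (real m) \<and>
                    (\<forall>z. \<bar>f z - \<phi> j z\<bar> < \<epsilon>)))"

definition push :: "(nat \<Rightarrow> nat) \<Rightarrow> (nat \<Rightarrow> complex) \<Rightarrow> (nat \<Rightarrow> complex)" where
  "push p a = (\<lambda>j. a (p j))"

end

theory Submission
  imports Defs
begin

text \<open>The vague part of d_Sigma depends only on the point set P(x), which a reindexing does not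
  change. In the product
  part, the first N coordinates of the reindexed sequence are coordinates p(j) of the original one,
  each controlled by 2^(p(j)+1) times d_prod, while the remaining coordinates weigh at most 2^-N
  in total. Hence reindexing by p is uniformly continuous, and its inverse is reindexing by the
  inverse of p.\<close>

definition dyadic_mean :: "(nat \<Rightarrow> real) \<Rightarrow> real" where
  "dyadic_mean g = (\<Sum>j. 1 / 2 ^ Suc j * g j)"

lemma sums_dyadic_weights: "(\<lambda>j. 1 / 2 ^ Suc j :: real) sums 1"
  using power_half_series by (simp add: power_one_over)

lemma summable_dyadic:
  assumes "\<And>j. \<bar>g j\<bar> \<le> B"
  shows "summable (\<lambda>j. 1 / 2 ^ Suc j * g j :: real)"
proof (rule summable_comparison_test')
  show "summable (\<lambda>j. B * (1 / 2 ^ Suc j) :: real)"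
    using sums_dyadic_weights sums_summable summable_mult by blast
  show "norm (1 / 2 ^ Suc j * g j) \<le> B * (1 / 2 ^ Suc j)" for j
    using assms[of j] by (simp add: abs_mult divide_right_mono)
qed

lemma summable_dyadic_unit:
  "(\<And>j. g j \<in> {0..1}) \<Longrightarrow> summable (\<lambda>j. 1 / 2 ^ Suc j * g j :: real)"
  by (rule summable_dyadic[of _ 1]) auto

lemma dyadic_mean_nonneg: "(\<And>j. g j \<in> {0..1}) \<Longrightarrow> 0 \<le> dyadic_mean g"
  unfolding dyadic_mean_def by (rule suminf_nonneg[OF summable_dyadic_unit]) auto

lemma dyadic_mean_eq_0_iff:
  "(\<And>j. g j \<in> {0..1}) \<Longrightarrow> dyadic_mean g = 0 \<longleftrightarrow> (\<forall>j. g j = 0)"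
  unfolding dyadic_mean_def by (subst suminf_eq_zero_iff[OF summable_dyadic_unit]) auto

lemma dyadic_mean_subadditive:
  assumes "\<And>j. g j \<le> h j + k j" "\<And>j. g j \<in> {0..1}" "\<And>j. h j \<in> {0..1}" "\<And>j. k j \<in> {0..1}"
  shows "dyadic_mean g \<le> dyadic_mean h + dyadic_mean k"
proof -
  have "dyadic_mean g \<le> (\<Sum>j. 1 / 2 ^ Suc j * h j + 1 / 2 ^ Suc j * k j)"
    unfolding dyadic_mean_def
  proof (rule suminf_le)
    show "1 / 2 ^ Suc j * g j \<le> 1 / 2 ^ Suc j * h j + 1 / 2 ^ Suc j * k j" for j
      using assms(1)[of j] by (simp add: add_divide_distrib[symmetric] divide_right_mono)
  qed (intro summable_add summable_dyadic_unit assms)+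
  also have "\<dots> = dyadic_mean h + dyadic_mean k"
    unfolding dyadic_mean_def by (intro suminf_add[symmetric] summable_dyadic_unit assms)
  finally show ?thesis .
qed

lemma dyadic_term_le_mean:
  "(\<And>j. g j \<in> {0..1}) \<Longrightarrow> g k \<le> 2 ^ Suc k * dyadic_mean g"
  using sum_le_suminf[OF summable_dyadic_unit, of g "{k}"]
  by (auto simp: dyadic_mean_def field_simps)

lemma dyadic_mean_le_partial:
  assumes "\<And>j. g j \<in> {0..1}"
  shows "dyadic_mean g \<le> (\<Sum>j<N. 1 / 2 ^ Suc j * g j) + 1 / 2 ^ N"
proof -
  have tail: "(\<Sum>j. 1 / 2 ^ Suc (j + N) * g (j + N)) \<le> (\<Sum>j. 1 / 2 ^ N * (1 / 2 ^ Suc j))"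
  proof (rule suminf_le)
    show "1 / 2 ^ Suc (j + N) * g (j + N) \<le> 1 / 2 ^ N * (1 / 2 ^ Suc j)" for j
      using assms[of "j + N"] by (simp add: power_add mult_ac divide_right_mono)
    show "summable (\<lambda>j. 1 / 2 ^ Suc (j + N) * g (j + N))"
      using summable_dyadic_unit[OF assms] summable_iff_shift[of "\<lambda>j. 1 / 2 ^ Suc j * g j" N]
      by simp
    show "summable (\<lambda>j. 1 / 2 ^ N * (1 / 2 ^ Suc j :: real))"
      using sums_dyadic_weights sums_summable summable_mult by blast
  qed
  have "(\<Sum>j. 1 / 2 ^ N * (1 / 2 ^ Suc j)) = (1 / 2 ^ N * 1 :: real)"
    by (rule sums_unique[symmetric], rule sums_mult[OF sums_dyadic_weights])
  with tail show ?thesis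
    using suminf_split_initial_segment[OF summable_dyadic_unit[OF assms], where k = N]
    by (simp add: dyadic_mean_def)
qed

lemma dyadic_mean_reindex_le:
  assumes "\<And>j. g j \<in> {0..1}"
  shows "dyadic_mean (g \<circ> p) \<le> (\<Sum>j<N. 2 ^ Suc (p j)) * dyadic_mean g + 1 / 2 ^ N"
proof -
  have "dyadic_mean (g \<circ> p) \<le> (\<Sum>j<N. 1 / 2 ^ Suc j * g (p j)) + 1 / 2 ^ N"
    using dyadic_mean_le_partial[of "g \<circ> p"] assms by simp
  also have "(\<Sum>j<N. 1 / 2 ^ Suc j * g (p j)) \<le> (\<Sum>j<N. 2 ^ Suc (p j) * dyadic_mean g)"
  proof (rule sum_mono)
    fix j
    have "1 / 2 ^ Suc j * g (p j) \<le> 1 * g (p j)"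
      using assms[of "p j"] one_le_power[of "2::real" "Suc j"] by (intro mult_right_mono) auto
    also have "\<dots> \<le> 2 ^ Suc (p j) * dyadic_mean g"
      using dyadic_term_le_mean[OF assms] by simp
    finally show "1 / 2 ^ Suc j * g (p j) \<le> 2 ^ Suc (p j) * dyadic_mean g" .
  qed
  finally show ?thesis by (simp add: sum_distrib_right)
qed

lemma min_dist_1_triangle:
  fixes x y z :: "'a::metric_space"
  shows "min (dist x z) 1 \<le> min (dist x y) 1 + min (dist y z) 1"
  using dist_triangle[of x z y] zero_le_dist[of x y] zero_le_dist[of y z]
  by (smt (verit) dist_commute min_def)

lemma dist_over_1_plus_dist_le_1 [simp]: "dist x y / (1 + dist x y) \<le> 1"
  using zero_le_dist[of x y] by (simp add: divide_le_eq_1 add_pos_nonneg)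

lemma dist_over_1_plus_dist_triangle:
  fixes x y z :: "'a::metric_space"
  shows "dist x z / (1 + dist x z) \<le> dist x y / (1 + dist x y) + dist y z / (1 + dist y z)"
proof -
  define s t u where "s = dist x y" "t = dist y z" "u = dist x z"
  have st: "s \<ge> 0" "t \<ge> 0" "u \<ge> 0" "u \<le> s + t"
    unfolding s_t_u_def using dist_triangle[of x z y] by (auto simp: dist_commute)
  have "u / (1 + u) \<le> (s + t) / (1 + (s + t))"
    using st by (simp add: divide_simps algebra_simps)
  also have "\<dots> \<le> s / (1 + s) + t / (1 + t)"
    using st by (simp add: divide_simps) (simp add: algebra_simps)
  finally show ?thesis unfolding s_t_u_def .
qed

lemma uniformly_continuous_map_if_Lipschitz_up_to:
  assumes "f \<in> mspace m1 \<rightarrow> mspace m2"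
    and "\<And>\<epsilon>. \<epsilon> > 0 \<Longrightarrow> \<exists>C. \<forall>x\<in>mspace m1. \<forall>y\<in>mspace m1.
                 mdist m2 (f x) (f y) \<le> C * mdist m1 x y + \<epsilon>"
  shows "uniformly_continuous_map m1 m2 f"
  unfolding uniformly_continuous_map_def
proof (intro conjI assms(1) allI impI)
  fix \<epsilon> :: real assume "\<epsilon> > 0"
  then obtain C where C: "\<forall>x\<in>mspace m1. \<forall>y\<in>mspace m1.
                              mdist m2 (f x) (f y) \<le> C * mdist m1 x y + \<epsilon> / 2"
    using assms(2)[of "\<epsilon> / 2"] by auto
  define K where "K = max C 1"
  have "mdist m2 (f y) (f x) < \<epsilon>"
    if "x \<in> mspace m1" "y \<in> mspace m1" "mdist m1 y x < \<epsilon> / (2 * K)" for x y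
  proof -
    have "mdist m2 (f y) (f x) \<le> K * mdist m1 y x + \<epsilon> / 2"
      using C that(1,2) mdist_nonneg[of m1 y x] unfolding K_def
      by (smt (verit) max.cobounded1 mult_right_mono)
    also have "K * mdist m1 y x < \<epsilon> / 2"
      using that(3) by (simp add: K_def field_simps)
    finally show ?thesis by simp
  qed
  moreover have "\<epsilon> / (2 * K) > 0" using \<open>\<epsilon> > 0\<close> by (simp add: K_def)
  ultimately show "\<exists>\<delta>>0. \<forall>x\<in>mspace m1. \<forall>y\<in>mspace m1.
                      mdist m1 y x < \<delta> \<longrightarrow> mdist m2 (f y) (f x) < \<epsilon>"
    by blast
qed

lemma d_prod_eq_dyadic_mean: "d_prod x y = dyadic_mean (\<lambda>j. min (dist (x j) (y j)) 1)"
  by (simp add: d_prod_def dyadic_mean_def dist_norm)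

lemma d_vague_eq_dyadic_mean:
  "d_vague \<phi> A B = dyadic_mean (\<lambda>j. dist (psum (\<phi> j) A) (psum (\<phi> j) B)
                                      / (1 + dist (psum (\<phi> j) A) (psum (\<phi> j) B)))"
  by (simp add: d_vague_def dyadic_mean_def dist_real_def)

lemma Metric_space_d_prod: "Metric_space UNIV d_prod"
proof
  fix x y z :: "nat \<Rightarrow> complex"
  show "0 \<le> d_prod x y"
    unfolding d_prod_eq_dyadic_mean by (rule dyadic_mean_nonneg) simp
  show "d_prod x y = d_prod y x"
    unfolding d_prod_eq_dyadic_mean by (simp add: dist_commute)
  show "d_prod x y = 0 \<longleftrightarrow> x = y"
    unfolding d_prod_eq_dyadic_mean
    by (subst dyadic_mean_eq_0_iff) (auto simp: fun_eq_iff min_def split: if_splits)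
  show "d_prod x z \<le> d_prod x y + d_prod y z"
    unfolding d_prod_eq_dyadic_mean
    by (rule dyadic_mean_subadditive) (simp_all add: min_dist_1_triangle)
qed

lemma d_vague_nonneg: "0 \<le> d_vague \<phi> A B"
  unfolding d_vague_eq_dyadic_mean by (rule dyadic_mean_nonneg) simp

lemma d_vague_commute: "d_vague \<phi> A B = d_vague \<phi> B A"
  unfolding d_vague_eq_dyadic_mean by (simp add: dist_commute)

lemma d_vague_self [simp]: "d_vague \<phi> A A = 0"
  by (simp add: d_vague_def)

lemma d_vague_triangle: "d_vague \<phi> A C \<le> d_vague \<phi> A B + d_vague \<phi> B C"
  unfolding d_vague_eq_dyadic_mean
  by (rule dyadic_mean_subadditive) (simp_all add: dist_over_1_plus_dist_triangle)

lemma Metric_space_d_Sigma: "Metric_space M (d_Sigma \<phi>)"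
proof -
  interpret P: Metric_space UNIV d_prod by (rule Metric_space_d_prod)
  show ?thesis
  proof
    fix x y z
    show "0 \<le> d_Sigma \<phi> x y"
      by (simp add: d_Sigma_def d_vague_nonneg)
    show "d_Sigma \<phi> x y = d_Sigma \<phi> y x"
      by (simp add: d_Sigma_def P.commute d_vague_commute)
    show "d_Sigma \<phi> x y = 0 \<longleftrightarrow> x = y"
    proof
      assume "d_Sigma \<phi> x y = 0"
      then have "d_prod x y = 0"
        using P.nonneg[of x y] d_vague_nonneg[of \<phi> "Pset x" "Pset y"]
        unfolding d_Sigma_def by linarith
      then show "x = y" by simp
    qed (simp add: d_Sigma_def)
    show "d_Sigma \<phi> x z \<le> d_Sigma \<phi> x y + d_Sigma \<phi> y z"
      using P.triangle[of x y z, simplified] d_vague_triangle[of \<phi> "Pset x" "Pset z" "Pset y"]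
      unfolding d_Sigma_def by linarith
  qed
qed

lemma push_inv_push: "surj p \<Longrightarrow> push (inv p) (push p x) = x"
  by (simp add: push_def surj_f_inv_f)

lemma push_push_inv: "inj p \<Longrightarrow> push p (push (inv p) x) = x"
  by (simp add: push_def)

lemma push_in_Conf_lf:
  assumes "inj p" "x \<in> Conf_lf"
  shows "push p x \<in> Conf_lf"
proof -
  have "finite {j. cmod (x (p j)) \<le> R}" if "R > 0" for R
    using finite_vimageI[of "{k. cmod (x k) \<le> R}" p] assms that by (auto simp: Conf_lf_def)
  moreover have "inj (x \<circ> p)"
    using assms by (auto simp: Conf_lf_def intro: inj_compose)
  ultimately show ?thesis
    by (simp add: Conf_lf_def push_def comp_def)
qed

lemma Pset_push: "surj p \<Longrightarrow> Pset (push p x) = Pset x"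
  by (simp add: Pset_def push_def image_image[symmetric])

lemma d_Sigma_push_le:
  assumes "surj p"
  shows "d_Sigma \<phi> (push p x) (push p y)
           \<le> (1 + (\<Sum>j<N. 2 ^ Suc (p j))) * d_Sigma \<phi> x y + 1 / 2 ^ N"
proof -
  define C :: real where "C = (\<Sum>j<N. 2 ^ Suc (p j))"
  have "C \<ge> 0" by (simp add: C_def sum_nonneg)
  have "d_Sigma \<phi> (push p x) (push p y)
          = d_prod (push p x) (push p y) + d_vague \<phi> (Pset x) (Pset y)"
    by (simp add: d_Sigma_def Pset_push[OF assms])
  also have "d_prod (push p x) (push p y) \<le> C * d_prod x y + 1 / 2 ^ N"
    using dyadic_mean_reindex_le[of "\<lambda>k. min (dist (x k) (y k)) 1" p N]
    by (simp add: d_prod_eq_dyadic_mean C_def push_def comp_def)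
  also have "C * d_prod x y + 1 / 2 ^ N + d_vague \<phi> (Pset x) (Pset y)
               \<le> (1 + C) * d_Sigma \<phi> x y + 1 / 2 ^ N"
    using mult_nonneg_nonneg[OF \<open>C \<ge> 0\<close> d_vague_nonneg[of \<phi> "Pset x" "Pset y"]]
      Metric_space.nonneg[OF Metric_space_d_prod, of x y]
    by (simp add: d_Sigma_def algebra_simps)
  finally show ?thesis by (simp add: C_def)
qed

lemma uniformly_continuous_map_push:
  assumes "bij p"
  shows "uniformly_continuous_map (metric (Conf_lf, d_Sigma \<phi>)) (metric (Conf_lf, d_Sigma \<phi>))
           (push p)"
proof -
  interpret Metric_space Conf_lf "d_Sigma \<phi>" by (rule Metric_space_d_Sigma)
  show ?thesis
  proof (rule uniformly_continuous_map_if_Lipschitz_up_to)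
    show "push p \<in> mspace (metric (Conf_lf, d_Sigma \<phi>)) \<rightarrow> mspace (metric (Conf_lf, d_Sigma \<phi>))"
      using push_in_Conf_lf bij_is_inj[OF assms] by auto
    fix \<epsilon> :: real assume "\<epsilon> > 0"
    then obtain N where "(1 / 2) ^ N < \<epsilon>"
      using real_arch_pow_inv[of \<epsilon> "1 / 2"] by auto
    then have "d_Sigma \<phi> (push p x) (push p y)
                 \<le> (1 + (\<Sum>j<N. 2 ^ Suc (p j))) * d_Sigma \<phi> x y + \<epsilon>" for x y
      using d_Sigma_push_le[OF bij_is_surj[OF assms], of \<phi> x y N] by (simp add: power_one_over)
    then show "\<exists>C. \<forall>x\<in>mspace (metric (Conf_lf, d_Sigma \<phi>)). \<forall>y\<in>mspace (metric (Conf_lf, d_Sigma \<phi>)).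
        mdist (metric (Conf_lf, d_Sigma \<phi>)) (push p x) (push p y)
          \<le> C * mdist (metric (Conf_lf, d_Sigma \<phi>)) x y + \<epsilon>"
      by auto
  qed
qed

theorem mainTheorem3:
  fixes \<phi> :: "nat \<Rightarrow> complex \<Rightarrow> real" and p :: "nat \<Rightarrow> nat"
  assumes "admissible_tests \<phi>" and "bij p"
  shows "continuous_map (Metric_space.mtopology Conf_lf (d_Sigma \<phi>))
                        (Metric_space.mtopology Conf_lf (d_Sigma \<phi>)) (push p)
       \<and> homeomorphic_map (Metric_space.mtopology Conf_lf (d_Sigma \<phi>))
                        (Metric_space.mtopology Conf_lf (d_Sigma \<phi>)) (push p)"
proof -
  interpret Metric_space Conf_lf "d_Sigma \<phi>" by (rule Metric_space_d_Sigma)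
  have continuous: "continuous_map mtopology mtopology (push q)" if "bij q" for q
    using uniformly_continuous_imp_continuous_map[OF uniformly_continuous_map_push[OF that, of \<phi>]]
    by simp
  have "homeomorphic_maps mtopology mtopology (push p) (push (inv p))"
    using continuous assms(2) bij_imp_bij_inv[OF assms(2)]
    by (simp add: homeomorphic_maps_def push_inv_push push_push_inv bij_is_inj bij_is_surj)
  then show ?thesis
    using continuous[OF assms(2)] homeomorphic_maps_imp_map by blast
qed

end
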